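(* Let $K:\ell^2\to\mathcal{H}$ be a bounded, linear and injective operator into a real Hilbert space $\mathcal{H}$, let $f\in\mathcal{H}$, let $w=(w_k)_{k\in\mathbb{N}}$ be a sequence with $w_k\ge w_0>0$ for all $k$, and fix $\gamma>0$. Let $\bar u\in\ell^2$ be the unique minimizer of $\Psi(u)=\frac12\|Ku-f\|_{\mathcal{H}}^2+\sum_{k=1}^\infty w_k|u_k|$ over $\ell^2$. Define $\mathcal{F}:\ell^2\to\ell^2$ by $\mathcal{F}(u)=u-\mathcal{S}_{\gamma w}(u-\gamma K^*(Ku-f))$, and for $u\in\ell^2$ let $\mathcal{A}(u)=\{k\in\mathbb{N}: |u-\gamma K^*(Ku-f)|_k>\gamma w_k\}$, $P_{\mathcal{A}(u)}$ the coordinate projection onto the indices in $\mathcal{A}(u)$, and $\mathcal{G}(u)=(I-P_{\mathcal{A}(u)})+\gamma P_{\mathcal{A}(u)}K^*K\in L(\ell^2,\ell^2)$. Let $\rho>0$ and $k_0\in\mathbb{N}$ be such that $\|u-\bar u\|<\rho$ implies $\mathcal{A}(u)\subset\{1,\dots,k_0\}$ (such $\rho,k_0$ exist). Then there exists $r\in(0,\rho]$ such that for every $u^0\in\ell^2$ with $\|u^0-\bar u\|<r$, the semismooth Newton iteration $u^{n+1}=u^n-\mathcal{G}(u^n)^{-1}\mathcal{F}(u^n)$, $n=0,1,2,\dots$, is well defined, all iterates satisfy $\|u^n-\bar u\|<r$, and $u^n\to\bar u$ superlinearly, i.e. $\|u^{n+1}-\bar u\|=o(\|u^n-\bar u\|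)$.
   Context: $\ell^2$ is the Hilbert space of real square-summable sequences with norm $\|\cdot\|$; $K^*$ is the Hilbert space adjoint of $K$. For a sequence $v=(v_k)$ with $v_k>0$, the soft-thresholding operator is $\mathcal{S}_{v}(u)_k=\max\{0,|u_k|-v_k\}\,\mathrm{sgn}(u_k)$; $\gamma w$ denotes the sequence $(\gamma w_k)$. $|x|_k$ denotes $|x_k|$. *)

theory Defs
  imports "HOL-Analysis.Analysis" "HOL-Library.Landau_Symbols"
begin

text \<open>The sequence space l2, represented as the set of square-summable real sequences
  (indices start at 0 instead of 1).\<close>
definition L2 :: "(nat \<Rightarrow> real) set" where
  "L2 = {u. summable (\<lambda>k. (u k)\<^sup>2)}"

definition l2inner :: "(nat \<Rightarrow> real) \<Rightarrow> (nat \<Rightarrow> real) \<Rightarrow> real" where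
  "l2inner u v = (\<Sum>k. u k * v k)"

definition l2norm :: "(nat \<Rightarrow> real) \<Rightarrow> real" where
  "l2norm u = sqrt (\<Sum>k. (u k)\<^sup>2)"

definition seq_add :: "(nat \<Rightarrow> real) \<Rightarrow> (nat \<Rightarrow> real) \<Rightarrow> nat \<Rightarrow> real" where
  "seq_add u v = (\<lambda>k. u k + v k)"

definition seq_diff :: "(nat \<Rightarrow> real) \<Rightarrow> (nat \<Rightarrow> real) \<Rightarrow> nat \<Rightarrow> real" where
  "seq_diff u v = (\<lambda>k. u k - v k)"

definition seq_scale :: "real \<Rightarrow> (nat \<Rightarrow> real) \<Rightarrow> nat \<Rightarrow> real" where
  "seq_scale a u = (\<lambda>k. a * u k)"

definition bounded_linear_l2 :: "((nat \<Rightarrow> real) \<Rightarrow> 'h::real_normed_vector) \<Rightarrow> bool" where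
  "bounded_linear_l2 K \<longleftrightarrow>
     (\<forall>u\<in>L2. \<forall>v\<in>L2. K (seq_add u v) = K u + K v) \<and>
     (\<forall>u\<in>L2. \<forall>a. K (seq_scale a u) = a *\<^sub>R K u) \<and>
     (\<exists>C. \<forall>u\<in>L2. norm (K u) \<le> C * l2norm u)"

definition is_adjoint_l2 :: "((nat \<Rightarrow> real) \<Rightarrow> 'h::real_inner) \<Rightarrow> ('h \<Rightarrow> nat \<Rightarrow> real) \<Rightarrow> bool" where
  "is_adjoint_l2 K Kadj \<longleftrightarrow>
     (\<forall>y. Kadj y \<in> L2) \<and> (\<forall>u\<in>L2. \<forall>y. inner (K u) y = l2inner u (Kadj y))"

definition soft :: "(nat \<Rightarrow> real) \<Rightarrow> (nat \<Rightarrow> real) \<Rightarrow> nat \<Rightarrow> real" where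
  "soft v u = (\<lambda>k. max 0 (\<bar>u k\<bar> - v k) * sgn (u k))"

text \<open>Tikhonov functional with weighted l1 penalty (value +\<infinity> if the penalty diverges).\<close>
definition Psi :: "((nat \<Rightarrow> real) \<Rightarrow> 'h::real_normed_vector) \<Rightarrow> 'h \<Rightarrow> (nat \<Rightarrow> real) \<Rightarrow> (nat \<Rightarrow> real) \<Rightarrow> ereal" where
  "Psi K f w u = ereal ((norm (K u - f))\<^sup>2 / 2) + (\<Sum>k. ereal (w k * \<bar>u k\<bar>))"

definition grad_step :: "((nat \<Rightarrow> real) \<Rightarrow> 'h::real_inner) \<Rightarrow> ('h \<Rightarrow> nat \<Rightarrow> real) \<Rightarrow> 'h \<Rightarrow> real \<Rightarrow> (nat \<Rightarrow> real) \<Rightarrow> nat \<Rightarrow> real" where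
  "grad_step K Kadj f \<gamma> u = (\<lambda>k. u k - \<gamma> * Kadj (K u - f) k)"

definition FF :: "((nat \<Rightarrow> real) \<Rightarrow> 'h::real_inner) \<Rightarrow> ('h \<Rightarrow> nat \<Rightarrow> real) \<Rightarrow> 'h \<Rightarrow> (nat \<Rightarrow> real) \<Rightarrow> real \<Rightarrow> (nat \<Rightarrow> real) \<Rightarrow> nat \<Rightarrow> real" where
  "FF K Kadj f w \<gamma> u = seq_diff u (soft (\<lambda>k. \<gamma> * w k) (grad_step K Kadj f \<gamma> u))"

definition active :: "((nat \<Rightarrow> real) \<Rightarrow> 'h::real_inner) \<Rightarrow> ('h \<Rightarrow> nat \<Rightarrow> real) \<Rightarrow> 'h \<Rightarrow> (nat \<Rightarrow> real) \<Rightarrow> real \<Rightarrow> (nat \<Rightarrow> real) \<Rightarrow> nat set" where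
  "active K Kadj f w \<gamma> u = {k. \<bar>grad_step K Kadj f \<gamma> u k\<bar> > \<gamma> * w k}"

definition GG :: "((nat \<Rightarrow> real) \<Rightarrow> 'h::real_inner) \<Rightarrow> ('h \<Rightarrow> nat \<Rightarrow> real) \<Rightarrow> 'h \<Rightarrow> (nat \<Rightarrow> real) \<Rightarrow> real \<Rightarrow> (nat \<Rightarrow> real) \<Rightarrow> (nat \<Rightarrow> real) \<Rightarrow> nat \<Rightarrow> real" where
  "GG K Kadj f w \<gamma> u v = (\<lambda>k. if k \<in> active K Kadj f w \<gamma> u then \<gamma> * Kadj (K v) k else v k)"

end

theory Submission
  imports Defs
begin

text \<open>The minimizer is characterised coordinatewise: \<open>\<bar>(K\<^sup>*(K ubar - f))\<^sub>k\<bar> \<le> w\<^sub>k\<close>, with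
  \<open>(K\<^sup>*(K ubar - f))\<^sub>k = -w\<^sub>k sgn ubar\<^sub>k\<close> on the support of \<open>ubar\<close>, so that \<open>F ubar = 0\<close>. Near \<open>ubar\<close> the
  active set lies in the finite set \<open>{..k0}\<close>, and each coordinate of the gradient step
  \<open>u - \<gamma> K\<^sup>*(Ku - f)\<close> is Lipschitz in \<open>u\<close>. Hence for \<open>u\<close> close to \<open>ubar\<close> every index active at \<open>u\<close>
  is at or above the threshold at \<open>ubar\<close>, with the same sign, and every index strictly above the
  threshold at \<open>ubar\<close> stays active. For such \<open>u\<close> the map \<open>F\<close> is affine on the relevant region and
  \<open>F u = G(u)(u - ubar)\<close>, so one Newton step lands exactly on \<open>ubar\<close>: the iteration terminates,
  which is more than superlinear convergence. \<open>G(u)\<close> is invertible because on the finite active set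
  it is a compression of \<open>K\<^sup>*K\<close>, positive definite as \<open>K\<close> is injective.\<close>

definition unit_seq :: "nat \<Rightarrow> nat \<Rightarrow> real" where
  "unit_seq k = (\<lambda>i. if i = k then 1 else 0)"

definition masked_normal_op ::
  "((nat \<Rightarrow> real) \<Rightarrow> 'h::real_inner) \<Rightarrow> ('h \<Rightarrow> nat \<Rightarrow> real) \<Rightarrow> real \<Rightarrow> nat set \<Rightarrow>
     (nat \<Rightarrow> real) \<Rightarrow> nat \<Rightarrow> real" where
  "masked_normal_op K Kadj \<gamma> A v = (\<lambda>k. if k \<in> A then \<gamma> * Kadj (K v) k else v k)"

lemma GG_eq_masked_normal_op:
  "GG K Kadj f w \<gamma> u = masked_normal_op K Kadj \<gamma> (active K Kadj f w \<gamma> u)"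
  by (rule ext) (simp add: GG_def masked_normal_op_def)

lemma L2_finite_support:
  assumes "finite A" and "\<And>k. k \<notin> A \<Longrightarrow> x k = 0"
  shows "x \<in> L2"
  unfolding L2_def mem_Collect_eq using assms by (intro summable_finite[of A]) auto

lemma unit_seq_L2: "unit_seq k \<in> L2"
  by (rule L2_finite_support[of "{k}"]) (auto simp: unit_seq_def)

lemma L2_abs_le:
  assumes "u \<in> L2" and "\<And>k. \<bar>v k\<bar> \<le> \<bar>u k\<bar>"
  shows "v \<in> L2"
  unfolding L2_def mem_Collect_eq
proof (rule summable_comparison_test'[of "\<lambda>k. (u k)\<^sup>2" 0])
  show "summable (\<lambda>k. (u k)\<^sup>2)" using assms(1) unfolding L2_def by simp
  show "norm ((v k)\<^sup>2) \<le> (u k)\<^sup>2" for k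
    using assms(2)[of k] by (simp add: abs_le_square_iff)
qed

lemma L2_add:
  assumes "u \<in> L2" and "v \<in> L2"
  shows "(\<lambda>k. u k + v k) \<in> L2"
  unfolding L2_def mem_Collect_eq
proof (rule summable_comparison_test'[of "\<lambda>k. 2 * (u k)\<^sup>2 + 2 * (v k)\<^sup>2" 0])
  show "summable (\<lambda>k. 2 * (u k)\<^sup>2 + 2 * (v k)\<^sup>2)"
    using assms unfolding L2_def by (intro summable_add summable_mult) auto
  show "norm ((u k + v k)\<^sup>2) \<le> 2 * (u k)\<^sup>2 + 2 * (v k)\<^sup>2" for k
    unfolding real_norm_def abs_power2 unfolding power2_sum
    using sum_squares_bound[of "u k" "v k"] by linarith
qed

lemma L2_scale: "u \<in> L2 \<Longrightarrow> (\<lambda>k. c * u k) \<in> L2"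
  unfolding L2_def mem_Collect_eq by (simp add: power_mult_distrib summable_mult)

lemma L2_diff: "u \<in> L2 \<Longrightarrow> v \<in> L2 \<Longrightarrow> (\<lambda>k. u k - v k) \<in> L2"
  using L2_add[of u "\<lambda>k. (-1) * v k"] L2_scale[of v "-1"] by simp

lemma L2_zero: "(\<lambda>k. 0) \<in> L2"
  unfolding L2_def by simp

lemma l2norm_nonneg: "u \<in> L2 \<Longrightarrow> l2norm u \<ge> 0"
  unfolding L2_def l2norm_def by (simp add: suminf_nonneg)

lemma abs_le_l2norm:
  assumes "u \<in> L2"
  shows "\<bar>u k\<bar> \<le> l2norm u"
proof -
  have "(u k)\<^sup>2 \<le> (\<Sum>i. (u i)\<^sup>2)"
    using assms sum_le_suminf[of "\<lambda>i. (u i)\<^sup>2" "{k}"] unfolding L2_def by auto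
  then show ?thesis
    unfolding l2norm_def using real_sqrt_abs real_sqrt_le_mono by metis
qed

lemma l2norm_seq_diff_self: "l2norm (seq_diff u u) = 0"
  unfolding l2norm_def seq_diff_def by simp

lemma nonneg_of_quadratic_perturbation:
  fixes c B \<delta> :: real
  assumes "\<delta> > 0" and "B \<ge> 0"
    and perturbation: "\<And>t. 0 < t \<Longrightarrow> t < \<delta> \<Longrightarrow> 0 \<le> t * c + t\<^sup>2 * B"
  shows "c \<ge> 0"
proof (rule ccontr)
  assume "\<not> c \<ge> 0"
  then have c: "c < 0" by simp
  define t where "t = min (\<delta> / 2) (- c / (B + 1))"
  have "- c / (B + 1) > 0" using c \<open>B \<ge> 0\<close> by (intro divide_pos_pos) auto
  then have t: "0 < t" "t < \<delta>" using \<open>\<delta> > 0\<close> unfolding t_def by auto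
  have "t * B \<le> (- c / (B + 1)) * B" unfolding t_def using \<open>B \<ge> 0\<close> by (intro mult_right_mono) auto
  also have "\<dots> = - c * (B / (B + 1))" by simp
  also have "\<dots> < - c * 1" using c \<open>B \<ge> 0\<close> by (intro mult_strict_left_mono) auto
  finally have "c + t * B < 0" by simp
  then have "t * (c + t * B) < 0" using t by (simp add: mult_pos_neg)
  moreover have "t * (c + t * B) = t * c + t\<^sup>2 * B" by (simp add: power2_eq_square algebra_simps)
  ultimately show False using perturbation[OF t] by simp
qed

text \<open>One-dimensional first-order condition for \<open>t \<mapsto> g t + B t\<^sup>2 + w \<bar>x + t\<bar>\<close> to be minimal
  at \<open>t = 0\<close>: \<open>-g\<close> is a subgradient of \<open>w \<bar>\<cdot>\<bar>\<close> at \<open>x\<close>.\<close>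
lemma abs_subgradient_of_variation:
  fixes g x w B :: real
  assumes "w > 0" and "B \<ge> 0"
    and variation: "\<And>t. 0 \<le> t * g + t\<^sup>2 * B + w * (\<bar>x + t\<bar> - \<bar>x\<bar>)"
  shows "\<bar>g\<bar> \<le> w" and "x \<noteq> 0 \<Longrightarrow> g = - w * sgn x"
proof -
  have directional: "s * g + w * e \<ge> 0"
    if "\<delta> > 0" and slope: "\<And>t. 0 < t \<Longrightarrow> t < \<delta> \<Longrightarrow> \<bar>x + s * t\<bar> - \<bar>x\<bar> \<le> e * t"
    for s e \<delta> :: real
  proof (rule nonneg_of_quadratic_perturbation[OF \<open>\<delta> > 0\<close>])
    show "s\<^sup>2 * B \<ge> 0" using \<open>B \<ge> 0\<close> by simp
    fix t :: real assume t: "0 < t" "t < \<delta>"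
    have "w * (\<bar>x + s * t\<bar> - \<bar>x\<bar>) \<le> w * (e * t)"
      using slope[OF t] \<open>w > 0\<close> by (intro mult_left_mono) auto
    then show "0 \<le> t * (s * g + w * e) + t\<^sup>2 * (s\<^sup>2 * B)"
      using variation[of "s * t"] by (simp add: power_mult_distrib algebra_simps)
  qed
  have "g + w \<ge> 0" using directional[of 1 1 1] by simp
  moreover have "- g + w \<ge> 0" using directional[of 1 "-1" 1] by simp
  ultimately show bound: "\<bar>g\<bar> \<le> w" by simp
  assume "x \<noteq> 0"
  then have "- sgn x * g - w \<ge> 0"
    using directional[of "\<bar>x\<bar>" "- sgn x" "-1"] by (simp add: sgn_if split: if_splits)
  then show "g = - w * sgn x" using bound \<open>x \<noteq> 0\<close> by (auto simp: sgn_if split: if_splits)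
qed

lemma threshold_crossing_locally_stable:
  fixes a c :: real
  assumes "c > 0"
  shows "\<exists>\<delta>>0. \<forall>x. \<bar>x - a\<bar> < \<delta> \<longrightarrow>
    (\<bar>x\<bar> > c \<longrightarrow> \<bar>a\<bar> \<ge> c \<and> sgn x = sgn a) \<and> (\<bar>a\<bar> > c \<longrightarrow> \<bar>x\<bar> > c)"
proof (cases "\<bar>a\<bar> = c")
  case True
  then show ?thesis using \<open>c > 0\<close> by (intro exI[of _ c]) (auto simp: sgn_if)
next
  case False
  then show ?thesis
    using \<open>c > 0\<close> by (intro exI[of _ "\<bar>\<bar>a\<bar> - c\<bar>"]) (auto simp: sgn_if)
qed

locale l2_operator =
  fixes K :: "(nat \<Rightarrow> real) \<Rightarrow> 'h::real_inner" and Kadj :: "'h \<Rightarrow> nat \<Rightarrow> real"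
  assumes bounded_linear: "bounded_linear_l2 K"
    and adjoint: "is_adjoint_l2 K Kadj"
begin

lemma K_add: "u \<in> L2 \<Longrightarrow> v \<in> L2 \<Longrightarrow> K (\<lambda>k. u k + v k) = K u + K v"
  using bounded_linear unfolding bounded_linear_l2_def seq_add_def by blast

lemma K_scale: "u \<in> L2 \<Longrightarrow> K (\<lambda>k. c * u k) = c *\<^sub>R K u"
  using bounded_linear unfolding bounded_linear_l2_def seq_scale_def by blast

lemma K_diff:
  assumes "u \<in> L2" and "v \<in> L2"
  shows "K (\<lambda>k. u k - v k) = K u - K v"
proof -
  have "K (\<lambda>k. u k - v k) = K (\<lambda>k. u k + (-1) * v k)" by simp
  also have "\<dots> = K u + K (\<lambda>k. (-1) * v k)" by (rule K_add[OF assms(1) L2_scale[OF assms(2)]])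
  also have "\<dots> = K u - K v" using assms K_scale[of v "-1"] by simp
  finally show ?thesis .
qed

lemma K_zero: "K (\<lambda>k. 0) = 0"
  using K_scale[OF L2_zero, of 0] by simp

lemma K_bounded: "\<exists>C\<ge>0. \<forall>u\<in>L2. norm (K u) \<le> C * l2norm u"
proof -
  obtain C where C: "\<forall>u\<in>L2. norm (K u) \<le> C * l2norm u"
    using bounded_linear unfolding bounded_linear_l2_def by blast
  then have "\<forall>u\<in>L2. norm (K u) \<le> \<bar>C\<bar> * l2norm u"
    using l2norm_nonneg by (meson abs_ge_self mult_right_mono order_trans)
  then show ?thesis by (intro exI[of _ "\<bar>C\<bar>"]) auto
qed

lemma Kadj_L2: "Kadj y \<in> L2"
  using adjoint unfolding is_adjoint_l2_def by blast

lemma inner_K_eq_suminf: "u \<in> L2 \<Longrightarrow> inner (K u) y = (\<Sum>k. u k * Kadj y k)"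
  using adjoint unfolding is_adjoint_l2_def l2inner_def by blast

lemma Kadj_eq_inner_unit_seq: "Kadj y k = inner (K (unit_seq k)) y"
proof -
  have "(\<lambda>i. unit_seq k i * Kadj y i) = (\<lambda>i. if i = k then Kadj y i else 0)"
    by (auto simp: unit_seq_def)
  then have "(\<lambda>i. unit_seq k i * Kadj y i) sums Kadj y k"
    using sums_single[of k "Kadj y"] by simp
  then show ?thesis using inner_K_eq_suminf[OF unit_seq_L2] sums_unique by metis
qed

lemma Kadj_add: "Kadj (a + b) k = Kadj a k + Kadj b k"
  by (simp add: Kadj_eq_inner_unit_seq inner_add_right)

lemma Kadj_diff: "Kadj (a - b) k = Kadj a k - Kadj b k"
  by (simp add: Kadj_eq_inner_unit_seq inner_diff_right)

lemma Kadj_scale: "Kadj (c *\<^sub>R a) k = c * Kadj a k"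
  by (simp add: Kadj_eq_inner_unit_seq)

lemma inner_K_eq_0_if_disjoint_support:
  assumes "x \<in> L2" and "\<And>k. x k = 0 \<or> Kadj y k = 0"
  shows "inner (K x) y = 0"
proof -
  have "(\<lambda>k. x k * Kadj y k) = (\<lambda>k. 0)" using assms(2) by (metis mult_eq_0_iff)
  then show ?thesis using inner_K_eq_suminf[OF assms(1)] by simp
qed

lemma eq_zero_if_K_eq_zero:
  "inj_on K L2 \<Longrightarrow> x \<in> L2 \<Longrightarrow> K x = 0 \<Longrightarrow> x = (\<lambda>k. 0)"
  using K_zero L2_zero unfolding inj_on_def by metis

text \<open>Induction on \<open>A\<close>; the new coordinate \<open>a\<close> is handled with the direction \<open>q = e\<^sub>a - p\<close>,
  where \<open>p\<close> (supported in \<open>A\<close>) makes \<open>K\<^sup>*K q\<close> vanish on \<open>A\<close>. Then \<open>(K\<^sup>*K q)\<^sub>a = \<parallel>K q\<parallel>\<^sup>2 > 0\<close>,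
  so adding a multiple of \<open>q\<close> fixes coordinate \<open>a\<close> without disturbing \<open>A\<close>.\<close>
lemma normal_equation_solvable_on_finite_set:
  assumes inj: "inj_on K L2" and "finite A"
  shows "\<exists>x. (\<forall>k. k \<notin> A \<longrightarrow> x k = 0) \<and> (\<forall>k\<in>A. Kadj (K x) k = t k)"
  using \<open>finite A\<close>
proof (induction A arbitrary: t rule: finite_induct)
  case empty
  show ?case by (intro exI[of _ "\<lambda>k. 0"]) simp
next
  case (insert a A)
  obtain x' where x': "\<forall>k. k \<notin> A \<longrightarrow> x' k = 0" "\<forall>k\<in>A. Kadj (K x') k = t k"
    using insert.IH by blast
  obtain p where p: "\<forall>k. k \<notin> A \<longrightarrow> p k = 0" "\<forall>k\<in>A. Kadj (K p) k = Kadj (K (unit_seq a)) k"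
    using insert.IH by blast
  define q where "q = (\<lambda>k. unit_seq a k - p k)"
  have pL: "p \<in> L2" and xL: "x' \<in> L2"
    using p(1) x'(1) insert(1) by (auto intro: L2_finite_support)
  have qL: "q \<in> L2" unfolding q_def using pL unit_seq_L2 by (intro L2_diff)
  have Kq: "K q = K (unit_seq a) - K p" unfolding q_def using pL unit_seq_L2 by (intro K_diff)
  have q_A: "\<forall>k\<in>A. Kadj (K q) k = 0" using p(2) by (simp add: Kq Kadj_diff)
  have "K q \<noteq> 0"
  proof
    assume "K q = 0"
    then have "q = (\<lambda>k. 0)" using eq_zero_if_K_eq_zero[OF inj qL] by blast
    moreover have "q a = 1" using p(1) insert(2) by (simp add: q_def unit_seq_def)
    ultimately show False by simp
  qed
  moreover have "Kadj (K q) a = inner (K q) (K q)"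
  proof -
    have "inner (K p) (K q) = 0"
      using pL p(1) q_A by (intro inner_K_eq_0_if_disjoint_support) auto
    moreover have "K (unit_seq a) = K q + K p" using Kq by simp
    ultimately show ?thesis by (simp add: Kadj_eq_inner_unit_seq inner_add_left)
  qed
  ultimately have q_a: "Kadj (K q) a > 0" by simp
  define c where "c = (t a - Kadj (K x') a) / Kadj (K q) a"
  define x where "x = (\<lambda>k. x' k + c * q k)"
  have "K x = K x' + c *\<^sub>R K q"
    unfolding x_def using xL qL L2_scale[OF qL] by (simp add: K_add K_scale)
  then have Kadj_x: "Kadj (K x) k = Kadj (K x') k + c * Kadj (K q) k" for k
    by (simp add: Kadj_add Kadj_scale)
  show ?case
  proof (intro exI[of _ x] conjI allI ballI impI)
    fix k assume "k \<notin> insert a A"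
    then show "x k = 0" using x'(1) p(1) by (simp add: x_def q_def unit_seq_def)
  next
    fix k assume k: "k \<in> insert a A"
    show "Kadj (K x) k = t k"
    proof (cases "k = a")
      case True
      then show ?thesis using q_a by (simp add: Kadj_x c_def)
    next
      case False
      then show ?thesis using k x'(2) q_A by (simp add: Kadj_x)
    qed
  qed
qed

lemma bij_betw_masked_normal_op:
  assumes inj: "inj_on K L2" and "finite A" and "\<gamma> \<noteq> 0"
  shows "bij_betw (masked_normal_op K Kadj \<gamma> A) L2 L2"
proof -
  let ?G = "masked_normal_op K Kadj \<gamma> A"
  have into: "?G v \<in> L2" if "v \<in> L2" for v
  proof -
    have "(\<lambda>k. \<bar>v k\<bar>) \<in> L2" using that by (rule L2_abs_le) simp
    moreover have "(\<lambda>k. \<bar>\<gamma> * Kadj (K v) k\<bar>) \<in> L2"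
      using L2_scale[OF Kadj_L2, of \<gamma> "K v"] by (rule L2_abs_le) simp
    ultimately have "(\<lambda>k. \<bar>v k\<bar> + \<bar>\<gamma> * Kadj (K v) k\<bar>) \<in> L2" by (rule L2_add)
    then show ?thesis by (rule L2_abs_le) (auto simp: masked_normal_op_def)
  qed
  have inj_G: "inj_on ?G L2"
  proof (rule inj_onI)
    fix v v' assume v: "v \<in> L2" "v' \<in> L2" and eq: "?G v = ?G v'"
    define d where "d = (\<lambda>k. v k - v' k)"
    have dL: "d \<in> L2" unfolding d_def using v by (rule L2_diff)
    have Kd: "K d = K v - K v'" unfolding d_def using v by (rule K_diff)
    have d_k: "d k = v k - v' k" for k unfolding d_def ..
    have "d k = 0 \<or> Kadj (K d) k = 0" for k
    proof (cases "k \<in> A")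
      case True
      then have "\<gamma> * Kadj (K v) k = \<gamma> * Kadj (K v') k"
        using fun_cong[OF eq, of k] by (simp add: masked_normal_op_def)
      then show ?thesis using \<open>\<gamma> \<noteq> 0\<close> by (simp add: Kd Kadj_diff)
    next
      case False
      then show ?thesis using fun_cong[OF eq, of k] by (simp add: masked_normal_op_def d_k)
    qed
    then have "inner (K d) (K d) = 0" using dL by (intro inner_K_eq_0_if_disjoint_support)
    then have "d = (\<lambda>k. 0)" using eq_zero_if_K_eq_zero[OF inj dL] by simp
    then have "v k = v' k" for k using d_k[of k] by simp
    then show "v = v'" ..
  qed
  have onto: "y \<in> ?G ` L2" if y: "y \<in> L2" for y
  proof -
    define y' where "y' = (\<lambda>k. if k \<in> A then 0 else y k)"
    have y'L: "y' \<in> L2" using y unfolding y'_def by (rule L2_abs_le) auto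
    obtain x where x: "\<forall>k. k \<notin> A \<longrightarrow> x k = 0"
      "\<forall>k\<in>A. Kadj (K x) k = y k / \<gamma> - Kadj (K y') k"
      using normal_equation_solvable_on_finite_set[OF inj \<open>finite A\<close>,
          of "\<lambda>k. y k / \<gamma> - Kadj (K y') k"] by blast
    have xL: "x \<in> L2" using x(1) \<open>finite A\<close> by (intro L2_finite_support) auto
    define v where "v = (\<lambda>k. y' k + x k)"
    have Kv: "K v = K y' + K x" unfolding v_def using y'L xL by (rule K_add)
    have "?G v k = y k" for k
    proof (cases "k \<in> A")
      case True
      then show ?thesis using x(2) \<open>\<gamma> \<noteq> 0\<close> by (simp add: masked_normal_op_def Kv Kadj_add)
    next
      case False
      then show ?thesis using x(1) by (simp add: masked_normal_op_def v_def y'_def)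
    qed
    then have "y = ?G v" by (simp add: fun_eq_iff)
    moreover have "v \<in> L2" unfolding v_def using y'L xL by (rule L2_add)
    ultimately show ?thesis by (rule image_eqI)
  qed
  have "?G ` L2 = L2"
  proof
    show "?G ` L2 \<subseteq> L2" using into by (rule image_subsetI)
    show "L2 \<subseteq> ?G ` L2" using onto by (rule subsetI)
  qed
  with inj_G show ?thesis unfolding bij_betw_def ..
qed

lemma grad_step_coordinate_lipschitz:
  obtains L where "\<And>k. L k > 0"
    and "\<And>u v k. u \<in> L2 \<Longrightarrow> v \<in> L2 \<Longrightarrow>
      \<bar>grad_step K Kadj f \<gamma> u k - grad_step K Kadj f \<gamma> v k\<bar> \<le> L k * l2norm (seq_diff u v)"
proof -
  obtain C where "C \<ge> 0" and C: "\<forall>x\<in>L2. norm (K x) \<le> C * l2norm x"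
    using K_bounded by blast
  define L where "L k = 1 + \<bar>\<gamma>\<bar> * norm (K (unit_seq k)) * C" for k
  have "L k > 0" for k unfolding L_def using \<open>C \<ge> 0\<close> by (simp add: add_pos_nonneg)
  moreover have "\<bar>grad_step K Kadj f \<gamma> u k - grad_step K Kadj f \<gamma> v k\<bar> \<le> L k * l2norm (seq_diff u v)"
    if "u \<in> L2" "v \<in> L2" for u v k
  proof -
    define d where "d = seq_diff u v"
    have dL: "d \<in> L2" unfolding d_def seq_diff_def using that by (rule L2_diff)
    have Kd: "K d = (K u - f) - (K v - f)"
      unfolding d_def seq_diff_def using K_diff[OF that] by simp
    have "grad_step K Kadj f \<gamma> u k - grad_step K Kadj f \<gamma> v k
        = d k - \<gamma> * Kadj ((K u - f) - (K v - f)) k"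
      by (simp add: grad_step_def d_def seq_diff_def Kadj_diff algebra_simps)
    then have step_diff: "grad_step K Kadj f \<gamma> u k - grad_step K Kadj f \<gamma> v k = d k - \<gamma> * Kadj (K d) k"
      by (simp only: Kd)
    have "\<bar>Kadj (K d) k\<bar> = \<bar>inner (K (unit_seq k)) (K d)\<bar>" by (simp add: Kadj_eq_inner_unit_seq)
    also have "\<dots> \<le> norm (K (unit_seq k)) * norm (K d)" by (rule Cauchy_Schwarz_ineq2)
    also have "\<dots> \<le> norm (K (unit_seq k)) * (C * l2norm d)" using C dL by (intro mult_left_mono) auto
    finally have "\<bar>\<gamma> * Kadj (K d) k\<bar> \<le> \<bar>\<gamma>\<bar> * (norm (K (unit_seq k)) * (C * l2norm d))"
      by (simp add: abs_mult mult_left_mono)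
    moreover have "\<bar>d k\<bar> \<le> l2norm d" using dL by (rule abs_le_l2norm)
    ultimately have "\<bar>d k - \<gamma> * Kadj (K d) k\<bar> \<le> l2norm d + \<bar>\<gamma>\<bar> * (norm (K (unit_seq k)) * (C * l2norm d))"
      by linarith
    then show ?thesis unfolding step_diff by (simp add: L_def d_def algebra_simps)
  qed
  ultimately show ?thesis using that by blast
qed

text \<open>Coordinates sitting exactly on the threshold at \<open>v\<close> may switch to either side, hence the
  non-strict inequality in the first conclusion.\<close>
lemma threshold_pattern_locally_stable:
  assumes "finite F" and "v \<in> L2" and c_pos: "\<And>k. c k > 0"
  obtains r where "r > 0"
    and "\<And>u k. u \<in> L2 \<Longrightarrow> l2norm (seq_diff u v) < r \<Longrightarrow> k \<in> F \<Longrightarrow>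
      (\<bar>grad_step K Kadj f \<gamma> u k\<bar> > c k \<longrightarrow>
         \<bar>grad_step K Kadj f \<gamma> v k\<bar> \<ge> c k \<and>
         sgn (grad_step K Kadj f \<gamma> u k) = sgn (grad_step K Kadj f \<gamma> v k)) \<and>
      (\<bar>grad_step K Kadj f \<gamma> v k\<bar> > c k \<longrightarrow> \<bar>grad_step K Kadj f \<gamma> u k\<bar> > c k)"
proof -
  let ?z = "grad_step K Kadj f \<gamma>"
  have "\<forall>k. \<exists>\<delta>>0. \<forall>x. \<bar>x - ?z v k\<bar> < \<delta> \<longrightarrow>
      (\<bar>x\<bar> > c k \<longrightarrow> \<bar>?z v k\<bar> \<ge> c k \<and> sgn x = sgn (?z v k)) \<and> (\<bar>?z v k\<bar> > c k \<longrightarrow> \<bar>x\<bar> > c k)"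
    using threshold_crossing_locally_stable c_pos by blast
  then obtain \<delta> where \<delta>_pos: "\<And>k. \<delta> k > 0"
    and \<delta>: "\<And>k x. \<bar>x - ?z v k\<bar> < \<delta> k \<Longrightarrow>
      (\<bar>x\<bar> > c k \<longrightarrow> \<bar>?z v k\<bar> \<ge> c k \<and> sgn x = sgn (?z v k)) \<and> (\<bar>?z v k\<bar> > c k \<longrightarrow> \<bar>x\<bar> > c k)"
    by metis
  obtain L where L_pos: "\<And>k. L k > 0"
    and L: "\<And>u v k. u \<in> L2 \<Longrightarrow> v \<in> L2 \<Longrightarrow> \<bar>?z u k - ?z v k\<bar> \<le> L k * l2norm (seq_diff u v)"
    using grad_step_coordinate_lipschitz by blast
  define r where "r = Min (insert 1 ((\<lambda>k. \<delta> k / L k) ` F))"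
  have "r > 0" unfolding r_def using \<open>finite F\<close> \<delta>_pos L_pos by simp
  moreover have "\<bar>?z u k - ?z v k\<bar> < \<delta> k"
    if "u \<in> L2" "l2norm (seq_diff u v) < r" "k \<in> F" for u k
  proof -
    have "r \<le> \<delta> k / L k" unfolding r_def using \<open>finite F\<close> \<open>k \<in> F\<close> by simp
    have "\<bar>?z u k - ?z v k\<bar> \<le> L k * l2norm (seq_diff u v)" using L that(1) \<open>v \<in> L2\<close> .
    also have "\<dots> < L k * r" using that(2) L_pos by simp
    also have "\<dots> \<le> \<delta> k" using \<open>r \<le> \<delta> k / L k\<close> L_pos by (simp add: pos_le_divide_eq mult.commute)
    finally show ?thesis .
  qed
  ultimately show ?thesis using that \<delta> by blast
qed

end

locale l1_tikhonov_minimizer = l2_operator K Kadj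
  for K :: "(nat \<Rightarrow> real) \<Rightarrow> 'h::real_inner" and Kadj :: "'h \<Rightarrow> nat \<Rightarrow> real" +
  fixes f :: 'h and w :: "nat \<Rightarrow> real" and ubar :: "nat \<Rightarrow> real"
  assumes w_pos: "\<And>k. w k > 0"
    and ubar_L2: "ubar \<in> L2"
    and ubar_min: "\<forall>u\<in>L2. Psi K f w ubar \<le> Psi K f w u"
begin

lemma weighted_l1_summable: "summable (\<lambda>k. w k * \<bar>ubar k\<bar>)"
proof -
  have nonneg: "\<And>k. 0 \<le> w k * \<bar>ubar k\<bar>" using w_pos by (simp add: less_imp_le)
  have "Psi K f w ubar \<le> Psi K f w (\<lambda>k. 0)" using ubar_min L2_zero by blast
  also have "\<dots> = ereal ((norm (K (\<lambda>k. 0) - f))\<^sup>2 / 2)"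
    unfolding Psi_def by (simp add: zero_ereal_def[symmetric])
  finally have "(\<Sum>k. ereal (w k * \<bar>ubar k\<bar>)) \<noteq> \<infinity>"
    unfolding Psi_def by auto
  then show ?thesis by (rule summable_ereal[rotated]) (rule nonneg)
qed

text \<open>Comparison of \<open>Psi\<close> at \<open>ubar\<close> and at \<open>ubar + t e\<^sub>a\<close>: the quadratic part changes by
  \<open>t (K\<^sup>*(K ubar - f))\<^sub>a + t\<^sup>2 \<parallel>K e\<^sub>a\<parallel>\<^sup>2 / 2\<close>, the penalty only in coordinate \<open>a\<close>.\<close>
lemma coordinate_variation_nonneg:
  "0 \<le> t * Kadj (K ubar - f) a + t\<^sup>2 * ((norm (K (unit_seq a)))\<^sup>2 / 2)
      + w a * (\<bar>ubar a + t\<bar> - \<bar>ubar a\<bar>)"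
proof -
  define r where "r = K ubar - f"
  define b where "b = K (unit_seq a)"
  define s where "s k = w k * \<bar>ubar k\<bar>" for k
  define \<delta> where "\<delta> = w a * (\<bar>ubar a + t\<bar> - \<bar>ubar a\<bar>)"
  define u where "u = (\<lambda>k. ubar k + t * unit_seq a k)"
  have uL: "u \<in> L2" unfolding u_def using ubar_L2 L2_scale[OF unit_seq_L2] by (rule L2_add)
  have Ku: "K u = K ubar + t *\<^sub>R b"
    unfolding u_def b_def using ubar_L2 L2_scale[OF unit_seq_L2] by (simp add: K_add K_scale unit_seq_L2)
  have s_summable: "summable s" using weighted_l1_summable unfolding s_def .
  have "(\<lambda>k. w k * \<bar>u k\<bar>) = (\<lambda>k. s k + (if k = a then \<delta> else 0))"
    by (auto simp: u_def s_def \<delta>_def unit_seq_def algebra_simps)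
  then have u_sums: "(\<lambda>k. w k * \<bar>u k\<bar>) sums (suminf s + \<delta>)"
    using sums_add[OF summable_sums[OF s_summable] sums_single[of a "\<lambda>_. \<delta>"]] by simp
  have "Psi K f w ubar = ereal ((norm r)\<^sup>2 / 2) + ereal (suminf s)"
    unfolding Psi_def r_def s_def using suminf_ereal'[OF weighted_l1_summable] by simp
  moreover have "Psi K f w u = ereal ((norm (r + t *\<^sub>R b))\<^sup>2 / 2) + ereal (suminf s + \<delta>)"
    unfolding Psi_def Ku r_def using suminf_ereal'[OF sums_summable[OF u_sums]] sums_unique[OF u_sums]
    by (simp add: algebra_simps)
  moreover have "Psi K f w ubar \<le> Psi K f w u" using ubar_min uL by blast
  ultimately have "(norm r)\<^sup>2 / 2 + suminf s \<le> (norm (r + t *\<^sub>R b))\<^sup>2 / 2 + (suminf s + \<delta>)"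
    by simp
  moreover have "(norm (r + t *\<^sub>R b))\<^sup>2 = (norm r)\<^sup>2 + 2 * t * inner b r + t\<^sup>2 * (norm b)\<^sup>2"
    unfolding power2_norm_eq_inner
    by (simp add: inner_add_left inner_add_right inner_commute power2_eq_square algebra_simps)
  moreover have "inner b r = Kadj (K ubar - f) a"
    unfolding b_def r_def by (rule Kadj_eq_inner_unit_seq[symmetric])
  ultimately show ?thesis unfolding \<delta>_def b_def by (simp add: algebra_simps add_divide_distrib)
qed

lemma optimality_conditions:
  shows "\<bar>Kadj (K ubar - f) k\<bar> \<le> w k"
    and "ubar k \<noteq> 0 \<Longrightarrow> Kadj (K ubar - f) k = - w k * sgn (ubar k)"
  using abs_subgradient_of_variation[OF w_pos _ coordinate_variation_nonneg[where a = k]] by simp_all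

lemma above_threshold_on_support:
  assumes "\<gamma> > 0" and "ubar k \<noteq> 0"
  shows "\<bar>grad_step K Kadj f \<gamma> ubar k\<bar> > \<gamma> * w k"
proof -
  have "grad_step K Kadj f \<gamma> ubar k = ubar k + \<gamma> * w k * sgn (ubar k)"
    using optimality_conditions(2)[OF assms(2)] by (simp add: grad_step_def)
  then show ?thesis using assms w_pos[of k] by (auto simp: sgn_if)
qed

lemma residual_at_threshold:
  assumes "\<gamma> > 0" and at_threshold: "\<bar>grad_step K Kadj f \<gamma> ubar k\<bar> \<ge> \<gamma> * w k"
  shows "Kadj (K ubar - f) k = - w k * sgn (grad_step K Kadj f \<gamma> ubar k)"
proof (cases "ubar k = 0")
  case True
  let ?g = "Kadj (K ubar - f) k"
  have z: "grad_step K Kadj f \<gamma> ubar k = - \<gamma> * ?g" using True by (simp add: grad_step_def)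
  then have "\<gamma> * w k \<le> \<gamma> * \<bar>?g\<bar>" using at_threshold \<open>\<gamma> > 0\<close> by (simp add: abs_mult)
  then have "w k = \<bar>?g\<bar>" using optimality_conditions(1)[of k] \<open>\<gamma> > 0\<close> by simp
  then show ?thesis using z \<open>\<gamma> > 0\<close> by (simp add: sgn_mult abs_mult_sgn)
next
  case False
  have z: "grad_step K Kadj f \<gamma> ubar k = ubar k + \<gamma> * w k * sgn (ubar k)"
    using optimality_conditions(2)[OF False] by (simp add: grad_step_def)
  have "\<gamma> * w k > 0" using \<open>\<gamma> > 0\<close> w_pos[of k] by simp
  then have "sgn (grad_step K Kadj f \<gamma> ubar k) = sgn (ubar k)"
    using z False by (cases "ubar k > 0") (simp_all add: sgn_if)
  then show ?thesis using optimality_conditions(2)[OF False] by simp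
qed

text \<open>On the set of \<open>u\<close> with this active set and sign pattern, \<open>F\<close> is affine and vanishes at \<open>ubar\<close>.\<close>
lemma newton_equation_solved_by_error:
  assumes "\<gamma> > 0" and "u \<in> L2"
    and active_sign: "\<And>k. k \<in> active K Kadj f w \<gamma> u \<Longrightarrow>
      \<bar>grad_step K Kadj f \<gamma> ubar k\<bar> \<ge> \<gamma> * w k \<and>
      sgn (grad_step K Kadj f \<gamma> u k) = sgn (grad_step K Kadj f \<gamma> ubar k)"
    and strictly_active: "\<And>k. \<bar>grad_step K Kadj f \<gamma> ubar k\<bar> > \<gamma> * w k \<Longrightarrow>
      k \<in> active K Kadj f w \<gamma> u"
  shows "GG K Kadj f w \<gamma> u (seq_diff u ubar) = FF K Kadj f w \<gamma> u"
proof
  fix k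
  let ?z = "grad_step K Kadj f \<gamma> u" and ?zbar = "grad_step K Kadj f \<gamma> ubar"
  define d where "d = seq_diff u ubar"
  have "K d = (K u - f) - (K ubar - f)"
    unfolding d_def seq_diff_def using K_diff[OF \<open>u \<in> L2\<close> ubar_L2] by simp
  then have Kadj_Kd: "Kadj (K d) k = Kadj (K u - f) k - Kadj (K ubar - f) k"
    by (simp add: Kadj_diff)
  have FF_k: "FF K Kadj f w \<gamma> u k = u k - max 0 (\<bar>?z k\<bar> - \<gamma> * w k) * sgn (?z k)"
    unfolding FF_def seq_diff_def soft_def by simp
  show "GG K Kadj f w \<gamma> u d k = FF K Kadj f w \<gamma> u k"
  proof (cases "k \<in> active K Kadj f w \<gamma> u")
    case True
    then have above: "\<bar>?z k\<bar> > \<gamma> * w k" unfolding active_def by simp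
    have "FF K Kadj f w \<gamma> u k = u k - ?z k + \<gamma> * w k * sgn (?z k)"
      unfolding FF_k using above by (simp add: abs_mult_sgn algebra_simps)
    also have "\<dots> = \<gamma> * Kadj (K u - f) k + \<gamma> * w k * sgn (?zbar k)"
      using active_sign[OF True] by (simp add: grad_step_def)
    also have "\<dots> = GG K Kadj f w \<gamma> u d k"
      using True residual_at_threshold[OF \<open>\<gamma> > 0\<close>] active_sign[OF True]
      by (simp add: GG_def Kadj_Kd algebra_simps)
    finally show ?thesis by simp
  next
    case False
    then have "\<bar>?z k\<bar> \<le> \<gamma> * w k" unfolding active_def by simp
    moreover have "ubar k = 0"
      using False strictly_active above_threshold_on_support[OF \<open>\<gamma> > 0\<close>] by blast
    ultimately show ?thesis using False by (simp add: GG_def FF_k d_def seq_diff_def)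
  qed
qed

lemma newton_step_lands_on_minimizer:
  assumes "inj_on K L2" and "\<gamma> > 0" and "u \<in> L2" and "finite (active K Kadj f w \<gamma> u)"
    and "\<And>k. k \<in> active K Kadj f w \<gamma> u \<Longrightarrow>
      \<bar>grad_step K Kadj f \<gamma> ubar k\<bar> \<ge> \<gamma> * w k \<and>
      sgn (grad_step K Kadj f \<gamma> u k) = sgn (grad_step K Kadj f \<gamma> ubar k)"
    and "\<And>k. \<bar>grad_step K Kadj f \<gamma> ubar k\<bar> > \<gamma> * w k \<Longrightarrow> k \<in> active K Kadj f w \<gamma> u"
  shows "bij_betw (GG K Kadj f w \<gamma> u) L2 L2"
    and "seq_diff u (the_inv_into L2 (GG K Kadj f w \<gamma> u) (FF K Kadj f w \<gamma> u)) = ubar"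
proof -
  show bij: "bij_betw (GG K Kadj f w \<gamma> u) L2 L2"
    unfolding GG_eq_masked_normal_op using assms(1,2,4) by (intro bij_betw_masked_normal_op) auto
  have "seq_diff u ubar \<in> L2" unfolding seq_diff_def using assms(3) ubar_L2 by (rule L2_diff)
  then have "the_inv_into L2 (GG K Kadj f w \<gamma> u) (FF K Kadj f w \<gamma> u) = seq_diff u ubar"
    using newton_equation_solved_by_error[OF assms(2,3,5,6)] bij
    by (metis bij_betw_def the_inv_into_f_f)
  then show "seq_diff u (the_inv_into L2 (GG K Kadj f w \<gamma> u) (FF K Kadj f w \<gamma> u)) = ubar"
    by (simp add: seq_diff_def)
qed

lemma newton_step_exact_near_minimizer:
  assumes "inj_on K L2" and "\<gamma> > 0" and "finite F" and "\<rho> > 0"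
    and active_near: "\<forall>u\<in>L2. l2norm (seq_diff u ubar) < \<rho> \<longrightarrow> active K Kadj f w \<gamma> u \<subseteq> F"
  obtains r where "0 < r" and "r \<le> \<rho>"
    and "\<And>u. u \<in> L2 \<Longrightarrow> l2norm (seq_diff u ubar) < r \<Longrightarrow>
      bij_betw (GG K Kadj f w \<gamma> u) L2 L2 \<and>
      seq_diff u (the_inv_into L2 (GG K Kadj f w \<gamma> u) (FF K Kadj f w \<gamma> u)) = ubar"
proof -
  have active_ubar: "active K Kadj f w \<gamma> ubar \<subseteq> F"
    using active_near ubar_L2 \<open>\<rho> > 0\<close> by (simp add: l2norm_seq_diff_self)
  obtain r where "r > 0" and pattern: "\<And>u k. u \<in> L2 \<Longrightarrow> l2norm (seq_diff u ubar) < r \<Longrightarrow> k \<in> F \<Longrightarrow>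
      (\<bar>grad_step K Kadj f \<gamma> u k\<bar> > \<gamma> * w k \<longrightarrow>
         \<bar>grad_step K Kadj f \<gamma> ubar k\<bar> \<ge> \<gamma> * w k \<and>
         sgn (grad_step K Kadj f \<gamma> u k) = sgn (grad_step K Kadj f \<gamma> ubar k)) \<and>
      (\<bar>grad_step K Kadj f \<gamma> ubar k\<bar> > \<gamma> * w k \<longrightarrow> \<bar>grad_step K Kadj f \<gamma> u k\<bar> > \<gamma> * w k)"
    using threshold_pattern_locally_stable[OF \<open>finite F\<close> ubar_L2, of "\<lambda>k. \<gamma> * w k"]
      \<open>\<gamma> > 0\<close> w_pos by auto
  have newton_step: "bij_betw (GG K Kadj f w \<gamma> u) L2 L2 \<and>
      seq_diff u (the_inv_into L2 (GG K Kadj f w \<gamma> u) (FF K Kadj f w \<gamma> u)) = ubar"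
    if u: "u \<in> L2" "l2norm (seq_diff u ubar) < min \<rho> r" for u
  proof -
    have active_u: "active K Kadj f w \<gamma> u \<subseteq> F" using active_near u by simp
    have "\<bar>grad_step K Kadj f \<gamma> ubar k\<bar> \<ge> \<gamma> * w k \<and>
        sgn (grad_step K Kadj f \<gamma> u k) = sgn (grad_step K Kadj f \<gamma> ubar k)"
      if "k \<in> active K Kadj f w \<gamma> u" for k
      using that active_u pattern u unfolding active_def by auto
    moreover have "k \<in> active K Kadj f w \<gamma> u" if "\<bar>grad_step K Kadj f \<gamma> ubar k\<bar> > \<gamma> * w k" for k
      using that active_ubar pattern u unfolding active_def by auto
    moreover have "finite (active K Kadj f w \<gamma> u)" using active_u \<open>finite F\<close> by (rule finite_subset)
    ultimately show ?thesis
      using newton_step_lands_on_minimizer[OF \<open>inj_on K L2\<close> \<open>\<gamma> > 0\<close> \<open>u \<in> L2\<close>] by blast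
  qed
  show ?thesis by (rule that[of "min \<rho> r"]) (use \<open>\<rho> > 0\<close> \<open>r > 0\<close> newton_step in auto)
qed

end

lemma iteration_terminating_in_one_step:
  fixes N :: "'a \<Rightarrow> 'a" and e :: "'a \<Rightarrow> real"
  assumes "P x0" and "P xbar" and "e xbar = 0" and "\<And>x. P x \<Longrightarrow> N x = xbar"
  shows "\<exists>x. x 0 = x0 \<and> (\<forall>n. P (x n) \<and> x (Suc n) = N (x n)) \<and>
    (\<lambda>n. e (x n)) \<longlonglongrightarrow> 0 \<and> (\<lambda>n. e (x (Suc n))) \<in> o(\<lambda>n. e (x n))"
proof -
  define x where "x n = (if n = 0 then x0 else xbar)" for n :: nat
  have error_Suc: "(\<lambda>n. e (x (Suc n))) = (\<lambda>n. 0)" using \<open>e xbar = 0\<close> by (simp add: x_def)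
  then have "(\<lambda>n. e (x (Suc n))) \<longlonglongrightarrow> 0" by simp
  then have "(\<lambda>n. e (x n)) \<longlonglongrightarrow> 0" by (rule LIMSEQ_imp_Suc)
  moreover note error_Suc
  moreover have "P (x n) \<and> x (Suc n) = N (x n)" for n using assms by (simp add: x_def)
  ultimately show ?thesis by (intro exI[of _ x]) (simp add: x_def)
qed

theorem theorem3p13:
  fixes K :: "(nat \<Rightarrow> real) \<Rightarrow> 'h::{real_inner, complete_space}"
    and Kadj :: "'h \<Rightarrow> nat \<Rightarrow> real"
    and f :: 'h and w :: "nat \<Rightarrow> real" and w0 \<gamma> \<rho> :: real and k0 :: nat
    and ubar :: "nat \<Rightarrow> real"
  assumes K_lin: "bounded_linear_l2 K"
    and K_inj: "inj_on K L2"
    and K_adj: "is_adjoint_l2 K Kadj"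
    and w0_pos: "w0 > 0" and w_ge: "\<forall>k. w k \<ge> w0"
    and gamma_pos: "\<gamma> > 0"
    and ubar_L2: "ubar \<in> L2"
    and ubar_min: "\<forall>u\<in>L2. Psi K f w ubar \<le> Psi K f w u"
    and ubar_unique: "\<forall>v\<in>L2. (\<forall>u\<in>L2. Psi K f w v \<le> Psi K f w u) \<longrightarrow> v = ubar"
    and rho_pos: "\<rho> > 0"
    and rho_k0: "\<forall>u\<in>L2. l2norm (seq_diff u ubar) < \<rho> \<longrightarrow> active K Kadj f w \<gamma> u \<subseteq> {..k0}"
  shows "\<exists>r. 0 < r \<and> r \<le> \<rho> \<and>
    (\<forall>u0\<in>L2. l2norm (seq_diff u0 ubar) < r \<longrightarrow>
      (\<exists>u :: nat \<Rightarrow> nat \<Rightarrow> real.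
         u 0 = u0 \<and>
         (\<forall>n. u n \<in> L2 \<and> l2norm (seq_diff (u n) ubar) < r \<and>
               bij_betw (GG K Kadj f w \<gamma> (u n)) L2 L2 \<and>
               u (Suc n) = seq_diff (u n)
                 (the_inv_into L2 (GG K Kadj f w \<gamma> (u n)) (FF K Kadj f w \<gamma> (u n)))) \<and>
         ((\<lambda>n. l2norm (seq_diff (u n) ubar)) \<longlonglongrightarrow> 0) \<and>
         (\<lambda>n. l2norm (seq_diff (u (Suc n)) ubar)) \<in> o(\<lambda>n. l2norm (seq_diff (u n) ubar))))"
proof -
  interpret l1_tikhonov_minimizer K Kadj f w ubar
    using K_lin K_adj w_ge w0_pos ubar_L2 ubar_min by unfold_locales (auto intro: less_le_trans)
  let ?N = "\<lambda>u. seq_diff u (the_inv_into L2 (GG K Kadj f w \<gamma> u) (FF K Kadj f w \<gamma> u))"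
  let ?e = "\<lambda>u. l2norm (seq_diff u ubar)"
  obtain r where "0 < r" and "r \<le> \<rho>"
    and newton_step: "\<And>u. u \<in> L2 \<Longrightarrow> ?e u < r \<Longrightarrow> bij_betw (GG K Kadj f w \<gamma> u) L2 L2 \<and> ?N u = ubar"
    using newton_step_exact_near_minimizer[OF K_inj gamma_pos finite_atMost rho_pos rho_k0] by blast
  let ?P = "\<lambda>u. u \<in> L2 \<and> ?e u < r \<and> bij_betw (GG K Kadj f w \<gamma> u) L2 L2"
  have "?P ubar" using newton_step[OF ubar_L2] \<open>0 < r\<close> ubar_L2 by (simp add: l2norm_seq_diff_self)
  have "\<exists>u. u 0 = u0 \<and>
      (\<forall>n. u n \<in> L2 \<and> ?e (u n) < r \<and> bij_betw (GG K Kadj f w \<gamma> (u n)) L2 L2 \<and>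
        u (Suc n) = ?N (u n)) \<and>
      (\<lambda>n. ?e (u n)) \<longlonglongrightarrow> 0 \<and> (\<lambda>n. ?e (u (Suc n))) \<in> o(\<lambda>n. ?e (u n))"
    if "u0 \<in> L2" "?e u0 < r" for u0
  proof -
    have "?P u0" using newton_step[OF that] that by blast
    from iteration_terminating_in_one_step[where P = ?P and N = ?N and e = ?e, OF this \<open>?P ubar\<close>
        l2norm_seq_diff_self] newton_step
    show ?thesis unfolding conj_assoc by blast
  qed
  then show ?thesis using \<open>0 < r\<close> \<open>r \<le> \<rho>\<close> by blast
qed

end
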